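(* Let $W$ be a complex reflection group acting on $V$ and let $g\in W$ satisfy $\ell_R(g)=\operatorname{codim}(V^g)$. Then: (1) every reflection $t$ with $t\le_{\mathcal R} g$ belongs to the parabolic closure $W_g$ of $g$; (2) for every parabolic subgroup $W_X\le W$ containing $g$, we have $\mathrm{Red}_W(g)=\mathrm{Red}_{W_X}(g)$.
   Context: $V$ is a finite-dimensional complex vector space with a Hermitian inner product; a (unitary) reflection is a unitary map whose fixed space is a hyperplane; a complex reflection group is a finite subgroup $W\le\mathrm{GL}(V)$ generated by reflections, with set of reflections $\mathcal R$. For $w\in W$, $V^w$ is its fixed space. The reflection length $\ell_R(g)$ is the minimal $k$ such that $g=t_1\cdots t_k$ with $t_i\in\mathcal R$; such a factorization of length $\ell_R(g)$ is reduced, and $\mathrm{Red}_W(g)$ denotes the set of tuples $(t_1,\dots,t_{\ell_R(g)})\in\mathcal R^{\ell_R(g)}$ with product $g$ (for a subgroup $W_X$, $\mathrm{Red}_{W_X}(g)$ uses reflections of $W_X$ and the reflection length in $W_X$). The absolute order is defined by $u\le_{\mathcal R}v$ iff $\ell_R(u)+\ell_R(u^{-1}v)=\ell_R(v)$. A parabolic subgroup is the pointwise stabilizer of a subset of $V$; the pointwise stabilizer of a flat (intersection of reflection hyperplanes) $X$ is denoted $W_X$. The parabolic closure $W_g$ of $g$ is the intersection of all parabolic subgroups containing $g$; it equals $W_{V^g}$. *)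

theory Defs
  imports "HOL-Analysis.Analysis"
begin

text \<open>V is modelled as complex^'n with the standard Hermitian inner product;
  elements of GL(V) are complex n x n matrices acting by (*v).\<close>

definition adjoint_mat :: "complex^'n^'n \<Rightarrow> complex^'n^'n" where
  "adjoint_mat A = (\<chi> i j. cnj (A $ j $ i))"

definition unitary_mat :: "complex^'n^'n \<Rightarrow> bool" where
  "unitary_mat A \<longleftrightarrow> A ** adjoint_mat A = mat 1 \<and> adjoint_mat A ** A = mat 1"

definition fixed_space :: "complex^'n^'n \<Rightarrow> (complex^'n) set" where
  "fixed_space w = {v. w *v v = v}"

definition codim :: "(complex^'n) set \<Rightarrow> nat" where
  "codim U = CARD('n) - vec.dim U"

definition is_reflection :: "complex^'n^'n \<Rightarrow> bool" where
  "is_reflection t \<longleftrightarrow> unitary_mat t \<and> codim (fixed_space t) = 1"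

definition reflections :: "(complex^'n^'n) set \<Rightarrow> (complex^'n^'n) set" where
  "reflections W = {t \<in> W. is_reflection t}"

definition mat_prod_list :: "(complex^'n^'n) list \<Rightarrow> complex^'n^'n" where
  "mat_prod_list ts = foldr (**) ts (mat 1)"

definition complex_reflection_group :: "(complex^'n^'n) set \<Rightarrow> bool" where
  "complex_reflection_group W \<longleftrightarrow>
     finite W \<and> mat 1 \<in> W \<and>
     (\<forall>a\<in>W. \<forall>b\<in>W. a ** b \<in> W) \<and>
     (\<forall>a\<in>W. invertible a \<and> matrix_inv a \<in> W) \<and>
     W = {mat_prod_list ts | ts. set ts \<subseteq> reflections W}"

definition refl_length :: "(complex^'n^'n) set \<Rightarrow> complex^'n^'n \<Rightarrow> nat" where
  "refl_length W g =
     (LEAST k. \<exists>ts. length ts = k \<and> set ts \<subseteq> reflections W \<and> mat_prod_list ts = g)"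

definition Red :: "(complex^'n^'n) set \<Rightarrow> complex^'n^'n \<Rightarrow> (complex^'n^'n) list set" where
  "Red W g = {ts. length ts = refl_length W g \<and> set ts \<subseteq> reflections W \<and> mat_prod_list ts = g}"

definition abs_le :: "(complex^'n^'n) set \<Rightarrow> complex^'n^'n \<Rightarrow> complex^'n^'n \<Rightarrow> bool" where
  "abs_le W u v \<longleftrightarrow> refl_length W u + refl_length W (matrix_inv u ** v) = refl_length W v"

definition pointwise_stab :: "(complex^'n^'n) set \<Rightarrow> (complex^'n) set \<Rightarrow> (complex^'n^'n) set" where
  "pointwise_stab W A = {w \<in> W. \<forall>v\<in>A. w *v v = v}"

definition parabolic_subgroup :: "(complex^'n^'n) set \<Rightarrow> (complex^'n^'n) set \<Rightarrow> bool" where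
  "parabolic_subgroup W P \<longleftrightarrow> (\<exists>A. P = pointwise_stab W A)"

definition parabolic_closure :: "(complex^'n^'n) set \<Rightarrow> complex^'n^'n \<Rightarrow> (complex^'n^'n) set" where
  "parabolic_closure W g = \<Inter>{P. parabolic_subgroup W P \<and> g \<in> P}"

end

theory Submission
  imports Defs
begin

text \<open>If \<open>g = t\<^sub>1 \<cdots> t\<^sub>k\<close> is a product of reflections, then \<open>V\<^sup>g\<close> contains the intersection
  of the fixed hyperplanes of the \<open>t\<^sub>i\<close>, which has codimension at most \<open>k\<close>. When
  \<open>k \<le> codim V\<^sup>g\<close> the two subspaces coincide, so every factor fixes \<open>V\<^sup>g\<close> pointwise and lies in
  every parabolic subgroup containing \<open>g\<close>. Under \<open>\<ell>\<^sub>R(g) = codim V\<^sup>g\<close> this applies to every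
  reduced factorization, and to a factorization of length \<open>\<ell>\<^sub>R(g)\<close> beginning with any
  reflection \<open>t \<le>\<^sub>R g\<close>.\<close>

definition common_fixed_space :: "(complex^'n^'n) list \<Rightarrow> (complex^'n) set" where
  "common_fixed_space ts = {v. \<forall>t\<in>set ts. t *v v = v}"

lemma subspace_fixed_space: "vec.subspace (fixed_space (A::complex^'n^'n))"
  unfolding vec.subspace_def fixed_space_def by (auto simp: vec.add vec.scale)

lemma subspace_common_fixed_space: "vec.subspace (common_fixed_space ts)"
  unfolding vec.subspace_def common_fixed_space_def by (auto simp: vec.add vec.scale)

lemma common_fixed_space_Cons:
  "common_fixed_space (t # ts) = fixed_space t \<inter> common_fixed_space ts"
  by (auto simp: common_fixed_space_def fixed_space_def)

lemma common_fixed_space_subset_fixed_space_prod: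
  "common_fixed_space ts \<subseteq> fixed_space (mat_prod_list ts)"
proof (induction ts)
  case Nil
  show ?case by (auto simp: fixed_space_def mat_prod_list_def)
next
  case (Cons t ts)
  then show ?case
    by (auto simp: common_fixed_space_Cons fixed_space_def mat_prod_list_def
        matrix_vector_mul_assoc[symmetric])
qed

lemma codim_UNIV: "codim (UNIV::(complex^'n) set) = 0"
  unfolding codim_def by (metis vec_dim_card diff_self_eq_0)

lemma codim_Int_le:
  assumes "vec.subspace S" "vec.subspace T"
  shows "codim (S \<inter> (T::(complex^'n) set)) \<le> codim S + codim T"
proof -
  have "vec.dim {x + y |x y. x \<in> S \<and> y \<in> T} + vec.dim (S \<inter> T) = vec.dim S + vec.dim T"
    using vec.dim_sums_Int[OF assms] .
  moreover have "vec.dim {x + y |x y. x \<in> S \<and> y \<in> T} \<le> CARD('n)"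
    "vec.dim S \<le> CARD('n)" "vec.dim T \<le> CARD('n)"
    by (rule dim_subset_UNIV_cart_gen)+
  ultimately show ?thesis unfolding codim_def by linarith
qed

lemma codim_common_fixed_space_le:
  assumes "\<forall>t\<in>set ts. is_reflection t"
  shows "codim (common_fixed_space ts) \<le> length ts"
  using assms
proof (induction ts)
  case Nil
  show ?case by (simp add: common_fixed_space_def codim_UNIV)
next
  case (Cons t ts)
  have "codim (fixed_space t) = 1" using Cons.prems by (simp add: is_reflection_def)
  then show ?case
    using Cons codim_Int_le[OF subspace_fixed_space subspace_common_fixed_space, of t ts]
    by (simp add: common_fixed_space_Cons)
qed

lemma fixed_space_prod_eq_common_fixed_space:
  assumes "\<forall>t\<in>set ts. is_reflection t"
    and "length ts \<le> codim (fixed_space (mat_prod_list ts))"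
  shows "fixed_space (mat_prod_list ts) = common_fixed_space ts"
proof -
  let ?G = "fixed_space (mat_prod_list ts)"
  have "codim (common_fixed_space ts) \<le> codim ?G"
    using codim_common_fixed_space_le[OF assms(1)] assms(2) by simp
  moreover have "vec.dim ?G \<le> CARD('a)" "vec.dim (common_fixed_space ts) \<le> CARD('a)"
    by (rule dim_subset_UNIV_cart_gen)+
  ultimately have "vec.dim ?G \<le> vec.dim (common_fixed_space ts)"
    unfolding codim_def by linarith
  then show ?thesis
    using vec.subspace_dim_equal[OF subspace_common_fixed_space subspace_fixed_space
        common_fixed_space_subset_fixed_space_prod] by blast
qed

lemma fixed_space_prod_subset_factor:
  assumes "\<forall>t\<in>set ts. is_reflection t"
    and "length ts \<le> codim (fixed_space (mat_prod_list ts))"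
    and "t \<in> set ts"
  shows "fixed_space (mat_prod_list ts) \<subseteq> fixed_space t"
  using fixed_space_prod_eq_common_fixed_space[OF assms(1,2)] assms(3)
  by (auto simp: common_fixed_space_def fixed_space_def)

lemma parabolic_subgroup_mem_if_fixed_space_subset:
  assumes "parabolic_subgroup W P" "g \<in> P" "t \<in> W" "fixed_space g \<subseteq> fixed_space t"
  shows "t \<in> P"
  using assms by (auto simp: parabolic_subgroup_def pointwise_stab_def fixed_space_def)

lemma refl_length_le:
  assumes "set ts \<subseteq> reflections W" "mat_prod_list ts = g"
  shows "refl_length W g \<le> length ts"
  unfolding refl_length_def using assms by (intro Least_le) blast

lemma Red_nonempty:
  assumes "set ts \<subseteq> reflections W" "mat_prod_list ts = g"
  shows "Red W g \<noteq> {}"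
proof -
  have "\<exists>k ts. length ts = k \<and> set ts \<subseteq> reflections W \<and> mat_prod_list ts = g"
    using assms by blast
  then have "\<exists>ts. length ts = refl_length W g \<and> set ts \<subseteq> reflections W \<and> mat_prod_list ts = g"
    unfolding refl_length_def by (rule LeastI_ex)
  then show ?thesis by (auto simp: Red_def)
qed

lemma complex_reflection_group_Red_nonempty:
  assumes "complex_reflection_group W" "g \<in> W"
  shows "Red W g \<noteq> {}"
proof -
  have "g \<in> {mat_prod_list ts |ts. set ts \<subseteq> reflections W}"
    using assms unfolding complex_reflection_group_def by blast
  then show ?thesis using Red_nonempty by blast
qed

lemma reflection_ne_one: "is_reflection t \<Longrightarrow> t \<noteq> mat 1"
  by (auto simp: is_reflection_def fixed_space_def codim_UNIV)

lemma refl_length_reflection_pos: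
  assumes "t \<in> reflections W"
  shows "refl_length W t > 0"
proof -
  have "Red W t \<noteq> {}"
    using Red_nonempty[of "[t]"] assms by (simp add: mat_prod_list_def)
  then obtain ts where "ts \<in> Red W t" by blast
  moreover have "t \<noteq> mat 1" using assms reflection_ne_one by (auto simp: reflections_def)
  ultimately show ?thesis by (cases ts) (auto simp: Red_def mat_prod_list_def)
qed

lemma matrix_mul_matrix_inv_right:
  assumes "invertible (A::complex^'n^'n)"
  shows "A ** matrix_inv A = mat 1"
  using assms unfolding invertible_def matrix_inv_def by (metis (mono_tags, lifting) someI_ex)

lemma abs_le_reflection_factorization:
  assumes "complex_reflection_group W" "g \<in> W" "t \<in> reflections W" "abs_le W t g"
  obtains ts where "set (t # ts) \<subseteq> reflections W" "mat_prod_list (t # ts) = g"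
    "length (t # ts) \<le> refl_length W g"
proof -
  have tW: "t \<in> W" using assms(3) by (simp add: reflections_def)
  have inv: "invertible t" "matrix_inv t ** g \<in> W"
    using assms(1,2) tW unfolding complex_reflection_group_def by auto
  obtain ts where ts: "ts \<in> Red W (matrix_inv t ** g)"
    using complex_reflection_group_Red_nonempty[OF assms(1) inv(2)] by blast
  have "mat_prod_list (t # ts) = g"
    using ts matrix_mul_matrix_inv_right[OF inv(1)]
    by (simp add: Red_def mat_prod_list_def matrix_mul_assoc)
  moreover have "length (t # ts) \<le> refl_length W g"
    using assms(4) refl_length_reflection_pos[OF assms(3)] ts
    by (simp add: abs_le_def Red_def)
  ultimately show thesis using that[of ts] ts assms(3) by (auto simp: Red_def)
qed

lemma Red_subgroup_eq:
  assumes "reflections P \<subseteq> reflections W" "Red W g \<noteq> {}"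
    and "\<And>ts. ts \<in> Red W g \<Longrightarrow> set ts \<subseteq> reflections P"
  shows "Red W g = Red P g"
proof -
  obtain ts where ts: "ts \<in> Red W g" using assms(2) by blast
  then have "refl_length P g \<le> refl_length W g"
    using assms(3) refl_length_le[of ts P g] by (simp add: Red_def)
  moreover obtain us where "us \<in> Red P g"
    using Red_nonempty[of ts P g] assms(3)[OF ts] ts by (auto simp: Red_def)
  then have "refl_length W g \<le> refl_length P g"
    using assms(1) refl_length_le[of us W g] by (auto simp: Red_def)
  ultimately have "refl_length P g = refl_length W g" by simp
  then show ?thesis using assms(1,3) by (auto simp: Red_def)
qed

theorem mainTheorem3:
  fixes W :: "(complex^'n^'n) set" and g :: "complex^'n^'n"
  assumes "complex_reflection_group W"
    and "g \<in> W"
    and "refl_length W g = codim (fixed_space g)"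
  shows "(\<forall>t\<in>reflections W. abs_le W t g \<longrightarrow> t \<in> parabolic_closure W g)
       \<and> (\<forall>P. parabolic_subgroup W P \<and> g \<in> P \<longrightarrow> Red W g = Red P g)"
proof -
  have factor_in_parabolic: "t \<in> P"
    if P: "parabolic_subgroup W P" "g \<in> P"
      and ts: "set ts \<subseteq> reflections W" "mat_prod_list ts = g" "length ts \<le> refl_length W g"
      and t: "t \<in> set ts" for P ts t
  proof -
    have refl: "\<forall>u\<in>set ts. is_reflection u" "t \<in> W"
      using ts(1) t by (auto simp: reflections_def)
    have "fixed_space g \<subseteq> fixed_space t"
      using fixed_space_prod_subset_factor[OF refl(1) _ t] ts(2,3) assms(3) by simp
    then show ?thesis
      using parabolic_subgroup_mem_if_fixed_space_subset[OF P refl(2)] by blast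
  qed
  have "t \<in> parabolic_closure W g" if t: "t \<in> reflections W" "abs_le W t g" for t
  proof -
    obtain ts where "set (t # ts) \<subseteq> reflections W" "mat_prod_list (t # ts) = g"
      "length (t # ts) \<le> refl_length W g"
      using abs_le_reflection_factorization[OF assms(1,2) t] .
    then show ?thesis
      unfolding parabolic_closure_def using factor_in_parabolic[of _ "t # ts" t] by simp
  qed
  moreover have "Red W g = Red P g" if P: "parabolic_subgroup W P" "g \<in> P" for P
  proof (rule Red_subgroup_eq)
    show "reflections P \<subseteq> reflections W"
      using P(1) by (auto simp: parabolic_subgroup_def pointwise_stab_def reflections_def)
    show "set ts \<subseteq> reflections P" if "ts \<in> Red W g" for ts
      using that factor_in_parabolic[OF P, of ts] by (auto simp: Red_def reflections_def)
  qed (rule complex_reflection_group_Red_nonempty[OF assms(1,2)])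
  ultimately show ?thesis by blast
qed

end
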